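(* Let $f:\mathbb{R}^d\to\mathbb{R}$ be differentiable with $L$-Lipschitz gradient. Consider parallel-step SGD iterations with $p$ processors (as defined in the context) with constant learning rate $\alpha\le\frac{1}{8L}$ satisfying elastic consistency with constant $B$. Then for every $t\ge0$, $$\mathbb{E}[f(\vec x_{t+1})]\le\mathbb{E}[f(\vec x_t)]-\frac{\alpha}{8}\mathbb{E}\|\nabla f(\vec x_t)\|^2+\frac{\alpha^3B^2L^2}{2}+\frac{L\alpha^2\sigma^2}{p}+2L^3\alpha^4B^2.$$
   Context: All random objects live on a probability space with a filtration $(\mathcal F_t)_{t\ge0}$. Parallel-step SGD iterations with $p$ processors: $\vec x_0\in\mathbb{R}^d$ is deterministic. For each $t\ge0$ a set $I_t\subseteq\{1,\dots,p\}$ with $p/2\le|I_t|\le p$ is given (fixed independently of the algorithm's randomness). Each $i\in I_t$ holds a view $\vec v_t^i$; $\vec x_t$ and all $\vec v_t^i$ are $\mathcal F_t$-measurable. Each $i\in I_t$ computes an $\mathcal F_{t+1}$-measurable stochastic gradient $\tilde G(\vec v_t^i)$; conditionally on $\mathcal F_t$ these are independent across $i\in I_t$, with $\mathbb{E}[\tilde G(\vec v_t^i)\mid\mathcal F_t]=\nabla f(\vec v_t^i)$ and $\mathbb{E}[\|\tilde G(\vec v_t^i)-\nabla f(\vec v_t^i)\|^2\mid\mathcal F_t]\le\sigma^2$. Update: $\vec x_{t+1}=\vec x_t-\frac{\alpha}{p}\sum_{i\in I_t}\tilde G(\vec v_t^i)$. Elastic consistency with constant $B>0$: $\mathbb{E}\|\vec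 x_t-\vec v_t^i\|^2\le\alpha^2B^2$ for all $t$ and all $i\in I_t$. *)

theory Defs
  imports "HOL-Probability.Probability"
begin

definition cond_indep_vars ::
  "'a measure \<Rightarrow> 'a measure \<Rightarrow> 'i set \<Rightarrow> ('i \<Rightarrow> 'a \<Rightarrow> 'b::topological_space) \<Rightarrow> bool" where
  "cond_indep_vars M F I X \<longleftrightarrow>
     (\<forall>A. (\<forall>i\<in>I. A i \<in> sets borel) \<longrightarrow>
        (AE \<omega> in M. real_cond_exp M F (\<lambda>\<omega>. \<Prod>i\<in>I. indicator (A i) (X i \<omega>)) \<omega>
                   = (\<Prod>i\<in>I. real_cond_exp M F (\<lambda>\<omega>. indicator (A i) (X i \<omega>)) \<omega>)))"

end

(* Apply the descent lemma  f y <= f x + <grad f x, y - x> + L/2 ||y - x||^2  pathwise to the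
   update  x_(t+1) = x_t - (alpha/p) sum_(i in I_t) G_i  and integrate.  In the linear term each G_i
   may be replaced by grad f (v_i), its conditional mean given F_t, and
   <grad f x_t, grad f v_i> >= ||grad f x_t||^2/2 - L^2 ||x_t - v_i||^2/2, where elastic consistency
   bounds the last term in expectation.  In the quadratic term sum G_i splits into the noise
   sum (G_i - grad f v_i) and sum grad f v_i; these two parts are uncorrelated, and so are the
   noise terms among themselves because the G_i are conditionally independent, hence the noise
   contributes at most |I_t| sigma^2.  The bounds p/2 <= |I_t| <= p and alpha L <= 1/8 then give
   the stated constants. *)

theory Submission
  imports Defs
begin

section \<open>Functions with Lipschitz gradient\<close>

lemma lipschitz_gradient_quadratic_upper_bound:
  fixes f :: "'v::real_inner \<Rightarrow> real"
  assumes deriv: "\<And>y. (f has_derivative (\<lambda>h. grad y \<bullet> h)) (at y)"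
    and lip: "L-lipschitz_on UNIV grad"
  shows "f y \<le> f x + grad x \<bullet> (y - x) + L / 2 * (norm (y - x))\<^sup>2"
proof -
  define d where "d = y - x"
  define \<phi> where "\<phi> = (\<lambda>s. f (x + s *\<^sub>R d) - s * (grad x \<bullet> d) - L / 2 * s\<^sup>2 * (norm d)\<^sup>2)"
  have line: "((\<lambda>s. f (x + s *\<^sub>R d)) has_real_derivative grad (x + s *\<^sub>R d) \<bullet> d) (at s)" for s
  proof -
    have "((\<lambda>s::real. x + s *\<^sub>R d) has_derivative (\<lambda>h. h *\<^sub>R d)) (at s)"
      by (auto intro!: derivative_eq_intros)
    from has_derivative_compose[OF this deriv] show ?thesis
      by (simp add: has_field_derivative_def mult_commute_abs)
  qed
  have \<phi>_deriv: "(\<phi> has_real_derivative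
      grad (x + s *\<^sub>R d) \<bullet> d - grad x \<bullet> d - L * s * (norm d)\<^sup>2) (at s)" for s
    unfolding \<phi>_def using line
    by (auto intro!: derivative_eq_intros simp: power2_eq_square algebra_simps)
  have "\<phi> 1 \<le> \<phi> 0"
  proof (rule DERIV_nonpos_imp_nonincreasing[of 0 1 \<phi>])
    fix s :: real assume s: "0 \<le> s" "s \<le> 1"
    have "(grad (x + s *\<^sub>R d) - grad x) \<bullet> d \<le> norm (grad (x + s *\<^sub>R d) - grad x) * norm d"
      by (rule norm_cauchy_schwarz)
    also have "\<dots> \<le> L * norm (s *\<^sub>R d) * norm d"
      using lipschitz_on_normD[OF lip, of "x + s *\<^sub>R d" x] by (intro mult_right_mono) auto
    also have "\<dots> = L * s * (norm d)\<^sup>2"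
      using s by (simp add: power2_eq_square)
    finally have "grad (x + s *\<^sub>R d) \<bullet> d - grad x \<bullet> d - L * s * (norm d)\<^sup>2 \<le> 0"
      by (simp add: inner_diff_left)
    with \<phi>_deriv show "\<exists>y. (\<phi> has_real_derivative y) (at s) \<and> y \<le> 0"
      by blast
  qed simp
  then show ?thesis
    unfolding \<phi>_def d_def by simp
qed

lemma abs_le_of_lipschitz_gradient:
  fixes f :: "'v::real_inner \<Rightarrow> real"
  assumes deriv: "\<And>y. (f has_derivative (\<lambda>h. grad y \<bullet> h)) (at y)"
    and lip: "L-lipschitz_on UNIV grad"
  shows "\<bar>f y\<bar> \<le> \<bar>f 0\<bar> + norm (grad 0) + (norm (grad 0) + 2 * L) * (norm y)\<^sup>2"
proof -
  have L: "0 \<le> L"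
    using lipschitz_on_nonneg[OF lip] .
  have upper: "f y \<le> f 0 + grad 0 \<bullet> y + L / 2 * (norm y)\<^sup>2"
    using lipschitz_gradient_quadratic_upper_bound[OF deriv lip, of y 0] by simp
  have lower: "f 0 \<le> f y - grad y \<bullet> y + L / 2 * (norm y)\<^sup>2"
    using lipschitz_gradient_quadratic_upper_bound[OF deriv lip, of 0 y] by simp
  have "norm (grad y) \<le> norm (grad 0) + L * norm y"
    using lipschitz_on_normD[OF lip, of y 0] norm_triangle_ineq2[of "grad y" "grad 0"] by simp
  then have "\<bar>grad y \<bullet> y\<bar> \<le> norm (grad 0) * norm y + L * (norm y)\<^sup>2"
    using Cauchy_Schwarz_ineq2[of "grad y" y] mult_right_mono[of _ _ "norm y"]
    by (fastforce simp: algebra_simps power2_eq_square)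
  moreover have "\<bar>grad 0 \<bullet> y\<bar> \<le> norm (grad 0) * norm y"
    by (rule Cauchy_Schwarz_ineq2)
  moreover have "norm y \<le> 1 + (norm y)\<^sup>2"
    using sum_squares_bound[of "norm y" 1] norm_ge_zero[of y]
    unfolding power_one mult_1_right by linarith
  then have "norm (grad 0) * norm y \<le> norm (grad 0) * (1 + (norm y)\<^sup>2)"
    by (intro mult_left_mono) auto
  moreover have "0 \<le> L * (norm y)\<^sup>2"
    using L by simp
  ultimately show ?thesis
    using upper lower abs_ge_self[of "f 0"] abs_ge_minus_self[of "f 0"]
    by (simp add: abs_le_iff algebra_simps; linarith)
qed

lemma norm_add_power2_le: "(norm (a + b))\<^sup>2 \<le> 2 * (norm a)\<^sup>2 + 2 * (norm (b::'v::real_normed_vector))\<^sup>2"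
proof -
  have "(norm (a + b))\<^sup>2 \<le> (norm a + norm b)\<^sup>2"
    by (intro power_mono norm_triangle_ineq) auto
  also have "\<dots> \<le> 2 * (norm a)\<^sup>2 + 2 * (norm b)\<^sup>2"
    using sum_squares_bound[of "norm a" "norm b"] by (simp add: power2_sum)
  finally show ?thesis .
qed

lemma inner_lipschitz_image_ge:
  fixes g :: "'v::real_inner \<Rightarrow> 'w::real_inner"
  assumes lip: "L-lipschitz_on UNIV g"
  shows "(norm (g x))\<^sup>2 / 2 - L\<^sup>2 * (norm (x - y))\<^sup>2 / 2 \<le> g x \<bullet> g y"
proof -
  have "(norm (g x - g y))\<^sup>2 \<le> (L * norm (x - y))\<^sup>2"
    using lipschitz_on_normD[OF lip, of x y] by (intro power_mono) auto
  moreover have "(norm (g x - g y))\<^sup>2 = (norm (g x))\<^sup>2 - 2 * (g x \<bullet> g y) + (norm (g y))\<^sup>2"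
    by (simp add: power2_norm_eq_inner inner_diff_left inner_diff_right inner_commute)
  ultimately show ?thesis
    using zero_le_power2[of "norm (g y)"] unfolding power_mult_distrib by linarith
qed

lemma norm_sum_lipschitz_image_power2_le:
  fixes g :: "'v::real_normed_vector \<Rightarrow> 'w::real_normed_vector"
  assumes lip: "L-lipschitz_on UNIV g"
  shows "(norm (\<Sum>i\<in>K. g (y i)))\<^sup>2
    \<le> real (card K) * (\<Sum>i\<in>K. 2 * (norm (g x))\<^sup>2 + 2 * L\<^sup>2 * (norm (x - y i))\<^sup>2)"
proof -
  have "(norm (\<Sum>i\<in>K. g (y i)))\<^sup>2 \<le> (\<Sum>i\<in>K. norm (g (y i)))\<^sup>2"
    by (intro power_mono norm_sum) simp
  also have "\<dots> \<le> (\<Sum>i\<in>K. (norm (g (y i)))\<^sup>2) * real (card K)"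
    by (rule sum_squared_le_sum_of_squares)
  also have "\<dots> \<le> (\<Sum>i\<in>K. 2 * (norm (g x))\<^sup>2 + 2 * L\<^sup>2 * (norm (x - y i))\<^sup>2) * real (card K)"
  proof (intro mult_right_mono sum_mono)
    fix i
    have "norm (g (y i) - g x) \<le> L * norm (x - y i)"
      using lipschitz_on_normD[OF lip, of "y i" x] by (simp add: norm_minus_commute)
    then have "(norm (g (y i) - g x))\<^sup>2 \<le> L\<^sup>2 * (norm (x - y i))\<^sup>2"
      by (metis norm_ge_zero power_mono power_mult_distrib)
    then show "(norm (g (y i)))\<^sup>2 \<le> 2 * (norm (g x))\<^sup>2 + 2 * L\<^sup>2 * (norm (x - y i))\<^sup>2"
      using norm_add_power2_le[of "g x" "g (y i) - g x"] by simp
  qed simp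
  finally show ?thesis
    by (simp add: mult.commute)
qed

section \<open>Square-integrable random variables\<close>

definition square_integrable :: "'a measure \<Rightarrow> ('a \<Rightarrow> 'v::euclidean_space) \<Rightarrow> bool" where
  "square_integrable M A \<longleftrightarrow> A \<in> borel_measurable M \<and> integrable M (\<lambda>\<omega>. (norm (A \<omega>))\<^sup>2)"

lemma square_integrableD:
  assumes "square_integrable M A"
  shows "A \<in> borel_measurable M" "integrable M (\<lambda>\<omega>. (norm (A \<omega>))\<^sup>2)"
  using assms unfolding square_integrable_def by auto

lemma square_integrable_bound:
  assumes "square_integrable M A" "B \<in> borel_measurable M" "\<And>\<omega>. norm (B \<omega>) \<le> norm (A \<omega>)"
  shows "square_integrable M B"
proof -
  have [measurable]: "A \<in> borel_measurable M" "B \<in> borel_measurable M"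
    using assms square_integrableD by auto
  have "integrable M (\<lambda>\<omega>. (norm (B \<omega>))\<^sup>2)"
    by (rule Bochner_Integration.integrable_bound[OF square_integrableD(2)[OF assms(1)]])
       (use assms(3) in \<open>auto intro!: AE_I2 power_mono\<close>)
  then show ?thesis
    unfolding square_integrable_def by simp
qed

lemma square_integrable_cong:
  "square_integrable M A \<Longrightarrow> (\<And>\<omega>. \<omega> \<in> space M \<Longrightarrow> B \<omega> = A \<omega>) \<Longrightarrow> square_integrable M B"
  unfolding square_integrable_def
  by (metis (no_types, lifting) Bochner_Integration.integrable_cong measurable_cong)

lemma square_integrable_add:
  assumes "square_integrable M A" "square_integrable M B"
  shows "square_integrable M (\<lambda>\<omega>. A \<omega> + B \<omega>)"
proof -
  have [measurable]: "A \<in> borel_measurable M" "B \<in> borel_measurable M"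
    using assms square_integrableD by auto
  have "integrable M (\<lambda>\<omega>. (norm (A \<omega> + B \<omega>))\<^sup>2)"
    by (rule Bochner_Integration.integrable_bound
        [where f="\<lambda>\<omega>. 2 * (norm (A \<omega>))\<^sup>2 + 2 * (norm (B \<omega>))\<^sup>2"])
       (use assms in \<open>auto simp: square_integrable_def norm_add_power2_le intro!: AE_I2\<close>)
  then show ?thesis
    unfolding square_integrable_def by simp
qed

lemma square_integrable_scaleR:
  "square_integrable M A \<Longrightarrow> square_integrable M (\<lambda>\<omega>. c *\<^sub>R A \<omega>)"
  unfolding square_integrable_def by (auto simp: power_mult_distrib)

lemma square_integrable_diff:
  assumes "square_integrable M A" "square_integrable M B"
  shows "square_integrable M (\<lambda>\<omega>. A \<omega> - B \<omega>)"
  using square_integrable_add[OF assms(1) square_integrable_scaleR[OF assms(2), of "-1"]] by simp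

lemma square_integrable_sum:
  "(\<And>i. i \<in> K \<Longrightarrow> square_integrable M (A i)) \<Longrightarrow> square_integrable M (\<lambda>\<omega>. \<Sum>i\<in>K. A i \<omega>)"
proof (induction K rule: infinite_finite_induct)
  case (insert i K)
  then show ?case
    by (simp add: square_integrable_add)
qed (simp_all add: square_integrable_def)

lemma integrable_inner_square_integrable:
  assumes "square_integrable M A" "square_integrable M B"
  shows "integrable M (\<lambda>\<omega>. A \<omega> \<bullet> B \<omega>)"
proof (rule Bochner_Integration.integrable_bound
    [where f="\<lambda>\<omega>. (norm (A \<omega>))\<^sup>2 + (norm (B \<omega>))\<^sup>2"])
  show "integrable M (\<lambda>\<omega>. (norm (A \<omega>))\<^sup>2 + (norm (B \<omega>))\<^sup>2)"
    using square_integrableD(2)[OF assms(1)] square_integrableD(2)[OF assms(2)] by simp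
  show "(\<lambda>\<omega>. A \<omega> \<bullet> B \<omega>) \<in> borel_measurable M"
    using assms square_integrableD by measurable
  have "\<bar>A \<omega> \<bullet> B \<omega>\<bar> \<le> (norm (A \<omega>))\<^sup>2 + (norm (B \<omega>))\<^sup>2" for \<omega>
    using Cauchy_Schwarz_ineq2[of "A \<omega>" "B \<omega>"] sum_squares_bound[of "norm (A \<omega>)" "norm (B \<omega>)"]
      mult_nonneg_nonneg[OF norm_ge_zero norm_ge_zero, of "A \<omega>" "B \<omega>"]
    by linarith
  then show "AE \<omega> in M. norm (A \<omega> \<bullet> B \<omega>) \<le> norm ((norm (A \<omega>))\<^sup>2 + (norm (B \<omega>))\<^sup>2)"
    by auto
qed

lemma integrable_mult_square_integrable:
  fixes a b :: "'a \<Rightarrow> real"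
  shows "square_integrable M a \<Longrightarrow> square_integrable M b \<Longrightarrow> integrable M (\<lambda>\<omega>. a \<omega> * b \<omega>)"
  using integrable_inner_square_integrable[of M a b] by simp

lemma square_integrable_inner_Basis:
  assumes "square_integrable M A" "b \<in> Basis"
  shows "square_integrable M (\<lambda>\<omega>. A \<omega> \<bullet> b)"
  using assms square_integrableD(1)[OF assms(1)]
  by (intro square_integrable_bound[OF assms(1)]) (auto simp: Basis_le_norm)

context finite_measure
begin

lemma square_integrable_const: "square_integrable M (\<lambda>\<omega>. c)"
  unfolding square_integrable_def by simp

lemma integrable_of_square_integrable:
  assumes "square_integrable M A"
  shows "integrable M A"
proof (rule Bochner_Integration.integrable_bound[where f="\<lambda>\<omega>. 1 + (norm (A \<omega>))\<^sup>2"])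
  show "integrable M (\<lambda>\<omega>. 1 + (norm (A \<omega>))\<^sup>2)"
    using square_integrableD[OF assms] by simp
  have "norm (A \<omega>) \<le> 1 + (norm (A \<omega>))\<^sup>2" for \<omega>
    using sum_squares_bound[of "norm (A \<omega>)" 1] norm_ge_zero[of "A \<omega>"]
    unfolding power_one mult_1_right by linarith
  then show "AE \<omega> in M. norm (A \<omega>) \<le> norm (1 + (norm (A \<omega>))\<^sup>2)"
    by auto
qed (use square_integrableD[OF assms] in simp)

lemma square_integrable_lipschitz_comp:
  assumes lip: "L-lipschitz_on UNIV g" and Y: "square_integrable M Y"
  shows "square_integrable M (\<lambda>\<omega>. g (Y \<omega>))"
proof (rule square_integrable_bound)
  have [measurable]: "g \<in> borel_measurable borel"
    by (rule borel_measurable_continuous_onI[OF lipschitz_on_continuous_on[OF lip]])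
  show "(\<lambda>\<omega>. g (Y \<omega>)) \<in> borel_measurable M"
    using square_integrableD(1)[OF Y] by measurable
  have "square_integrable M (\<lambda>\<omega>. norm (Y \<omega>))"
    by (rule square_integrable_bound[OF Y]) (use square_integrableD(1)[OF Y] in auto)
  from square_integrable_add[OF square_integrable_const square_integrable_scaleR[OF this]]
  show "square_integrable M (\<lambda>\<omega>. norm (g 0) + L * norm (Y \<omega>))"
    by simp
  show "norm (g (Y \<omega>)) \<le> norm (norm (g 0) + L * norm (Y \<omega>))" for \<omega>
    using lipschitz_on_normD[OF lip, of "Y \<omega>" 0] norm_triangle_ineq2[of "g (Y \<omega>)" "g 0"] by simp
qed

lemma integrable_comp_of_lipschitz_gradient:
  fixes f :: "'v::euclidean_space \<Rightarrow> real"
  assumes deriv: "\<And>y. (f has_derivative (\<lambda>h. grad y \<bullet> h)) (at y)"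
    and lip: "L-lipschitz_on UNIV grad" and Y: "square_integrable M Y"
  shows "integrable M (\<lambda>\<omega>. f (Y \<omega>))"
proof (rule Bochner_Integration.integrable_bound
    [where f="\<lambda>\<omega>. \<bar>f 0\<bar> + norm (grad 0) + (norm (grad 0) + 2 * L) * (norm (Y \<omega>))\<^sup>2"])
  have [measurable]: "f \<in> borel_measurable borel"
    by (rule borel_measurable_continuous_onI) (rule has_derivative_continuous_on[OF deriv])
  show "integrable M (\<lambda>\<omega>. \<bar>f 0\<bar> + norm (grad 0) + (norm (grad 0) + 2 * L) * (norm (Y \<omega>))\<^sup>2)"
    using square_integrableD(2)[OF Y] by simp
  show "(\<lambda>\<omega>. f (Y \<omega>)) \<in> borel_measurable M"
    using square_integrableD(1)[OF Y] by measurable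
  show "AE \<omega> in M. norm (f (Y \<omega>))
      \<le> norm (\<bar>f 0\<bar> + norm (grad 0) + (norm (grad 0) + 2 * L) * (norm (Y \<omega>))\<^sup>2)"
    using abs_le_of_lipschitz_gradient[OF deriv lip] by (auto intro!: AE_I2 order_trans[OF _ abs_ge_self])
qed

lemma square_integrable_iterate:
  assumes "square_integrable M (x 0)" and "\<And>s. square_integrable M (D s)"
    and "\<And>s \<omega>. \<omega> \<in> space M \<Longrightarrow> x (Suc s) \<omega> = x s \<omega> - D s \<omega>"
  shows "square_integrable M (x s)"
proof (induction s)
  case (Suc s)
  from square_integrable_diff[OF Suc assms(2)] show ?case
    by (rule square_integrable_cong) (simp add: assms(3))
qed (rule assms(1))

lemma integral_lipschitz_gradient_step_le:
  fixes f :: "'v::euclidean_space \<Rightarrow> real"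
  assumes deriv: "\<And>y. (f has_derivative (\<lambda>h. grad y \<bullet> h)) (at y)"
    and lip: "L-lipschitz_on UNIV grad"
    and Y: "square_integrable M Y" and D: "square_integrable M D"
  shows "(\<integral>\<omega>. f (Y \<omega> - \<eta> *\<^sub>R D \<omega>) \<partial>M)
    \<le> (\<integral>\<omega>. f (Y \<omega>) \<partial>M) - \<eta> * (\<integral>\<omega>. grad (Y \<omega>) \<bullet> D \<omega> \<partial>M)
      + L / 2 * \<eta>\<^sup>2 * (\<integral>\<omega>. (norm (D \<omega>))\<^sup>2 \<partial>M)"
proof -
  have fY: "integrable M (\<lambda>\<omega>. f (Y \<omega>))"
    using integrable_comp_of_lipschitz_gradient[OF deriv lip Y] .
  have gD: "integrable M (\<lambda>\<omega>. grad (Y \<omega>) \<bullet> D \<omega>)"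
    using integrable_inner_square_integrable[OF square_integrable_lipschitz_comp[OF lip Y] D] .
  have D2: "integrable M (\<lambda>\<omega>. (norm (D \<omega>))\<^sup>2)"
    using square_integrableD(2)[OF D] .
  have "(\<integral>\<omega>. f (Y \<omega> - \<eta> *\<^sub>R D \<omega>) \<partial>M)
      \<le> (\<integral>\<omega>. f (Y \<omega>) - \<eta> * (grad (Y \<omega>) \<bullet> D \<omega>) + L / 2 * \<eta>\<^sup>2 * (norm (D \<omega>))\<^sup>2 \<partial>M)"
  proof (rule integral_mono)
    show "integrable M (\<lambda>\<omega>. f (Y \<omega> - \<eta> *\<^sub>R D \<omega>))"
      by (rule integrable_comp_of_lipschitz_gradient[OF deriv lip])
         (intro square_integrable_diff square_integrable_scaleR Y D)
    show "f (Y \<omega> - \<eta> *\<^sub>R D \<omega>) \<le> f (Y \<omega>) - \<eta> * (grad (Y \<omega>) \<bullet> D \<omega>) + L / 2 * \<eta>\<^sup>2 * (norm (D \<omega>))\<^sup>2"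
      for \<omega>
      using lipschitz_gradient_quadratic_upper_bound[OF deriv lip, of "Y \<omega> - \<eta> *\<^sub>R D \<omega>" "Y \<omega>"]
      by (simp add: power_mult_distrib)
  qed (use fY gD D2 in simp)
  also have "\<dots> = (\<integral>\<omega>. f (Y \<omega>) \<partial>M) - \<eta> * (\<integral>\<omega>. grad (Y \<omega>) \<bullet> D \<omega> \<partial>M)
      + L / 2 * \<eta>\<^sup>2 * (\<integral>\<omega>. (norm (D \<omega>))\<^sup>2 \<partial>M)"
    using fY gD D2 by simp
  finally show ?thesis .
qed

end

lemma integral_norm_sum_power2_orthogonal:
  fixes D :: "'i \<Rightarrow> 'a \<Rightarrow> 'v::euclidean_space"
  assumes "finite K" and D: "\<And>i. i \<in> K \<Longrightarrow> square_integrable M (D i)"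
    and orth: "\<And>i j. i \<in> K \<Longrightarrow> j \<in> K \<Longrightarrow> i \<noteq> j \<Longrightarrow> (\<integral>\<omega>. D i \<omega> \<bullet> D j \<omega> \<partial>M) = 0"
  shows "(\<integral>\<omega>. (norm (\<Sum>i\<in>K. D i \<omega>))\<^sup>2 \<partial>M) = (\<Sum>i\<in>K. \<integral>\<omega>. (norm (D i \<omega>))\<^sup>2 \<partial>M)"
proof -
  have int: "integrable M (\<lambda>\<omega>. D i \<omega> \<bullet> D j \<omega>)" if "i \<in> K" "j \<in> K" for i j
    using integrable_inner_square_integrable[OF D D] that .
  have "(\<integral>\<omega>. (norm (\<Sum>i\<in>K. D i \<omega>))\<^sup>2 \<partial>M) = (\<integral>\<omega>. (\<Sum>i\<in>K. \<Sum>j\<in>K. D i \<omega> \<bullet> D j \<omega>) \<partial>M)"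
    by (simp add: power2_norm_eq_inner inner_sum_left inner_sum_right) (subst sum.swap, rule refl)
  also have "\<dots> = (\<Sum>i\<in>K. \<Sum>j\<in>K. \<integral>\<omega>. D i \<omega> \<bullet> D j \<omega> \<partial>M)"
    by (simp add: int Bochner_Integration.integrable_sum)
  also have "\<dots> = (\<Sum>i\<in>K. \<integral>\<omega>. D i \<omega> \<bullet> D i \<omega> \<partial>M)"
  proof (rule sum.cong[OF refl])
    fix i assume "i \<in> K"
    then show "(\<Sum>j\<in>K. \<integral>\<omega>. D i \<omega> \<bullet> D j \<omega> \<partial>M) = (\<integral>\<omega>. D i \<omega> \<bullet> D i \<omega> \<partial>M)"
      using orth[of i] by (subst sum.remove[OF \<open>finite K\<close>]) (auto intro!: sum.neutral, metis)
  qed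
  finally show ?thesis
    by (simp add: power2_norm_eq_inner)
qed

section \<open>Conditional independence and uncorrelated noise\<close>

lemma integral_mult_comp_eq_of_indicator:
  fixes V :: "'a \<Rightarrow> 'w::topological_space" and k :: "'w \<Rightarrow> real"
  assumes [measurable]: "V \<in> borel_measurable M" "w1 \<in> borel_measurable M" "w2 \<in> borel_measurable M"
      "k \<in> borel_measurable borel"
    and nonneg: "\<And>\<omega>. 0 \<le> w1 \<omega>" "\<And>\<omega>. 0 \<le> w2 \<omega>"
    and int: "integrable M w1" "integrable M w2"
    and eq: "\<And>B. B \<in> sets borel \<Longrightarrow>
      (\<integral>\<omega>. w1 \<omega> * indicator B (V \<omega>) \<partial>M) = (\<integral>\<omega>. w2 \<omega> * indicator B (V \<omega>) \<partial>M)"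
  shows "(\<integral>\<omega>. w1 \<omega> * k (V \<omega>) \<partial>M) = (\<integral>\<omega>. w2 \<omega> * k (V \<omega>) \<partial>M)"
proof -
  \<comment> \<open>The push-forwards under V of the measures with densities w1 and w2 agree on Borel sets.\<close>
  let ?N = "\<lambda>w. distr (density M (\<lambda>\<omega>. ennreal (w \<omega>))) borel V"
  have V_density: "V \<in> measurable (density M (\<lambda>\<omega>. ennreal (w \<omega>))) borel" for w
    by (simp add: measurable_cong_sets[OF sets_density refl])
  have emeasure_N: "emeasure (?N w) B = ennreal (\<integral>\<omega>. w \<omega> * indicator B (V \<omega>) \<partial>M)"
    if [measurable]: "w \<in> borel_measurable M" and w: "\<And>\<omega>. 0 \<le> w \<omega>" "integrable M w"
      and [measurable]: "B \<in> sets borel" for w B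
  proof -
    have "emeasure (?N w) B = emeasure (density M (\<lambda>\<omega>. ennreal (w \<omega>))) (V -` B \<inter> space M)"
      by (subst emeasure_distr[OF V_density]) simp_all
    also have "\<dots> = (\<integral>\<^sup>+\<omega>. ennreal (w \<omega> * indicator B (V \<omega>)) \<partial>M)"
      by (subst emeasure_density) (auto intro!: nn_integral_cong simp: indicator_def)
    also have "\<dots> = ennreal (\<integral>\<omega>. w \<omega> * indicator B (V \<omega>) \<partial>M)"
      by (rule nn_integral_eq_integral)
         (auto intro!: AE_I2 Bochner_Integration.integrable_bound[OF w(2)] simp: w(1) indicator_def)
    finally show ?thesis .
  qed
  have integral_N: "integral\<^sup>L (?N w) k = (\<integral>\<omega>. w \<omega> * k (V \<omega>) \<partial>M)"
    if [measurable]: "w \<in> borel_measurable M" and w: "\<And>\<omega>. 0 \<le> w \<omega>" for w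
    by (simp add: integral_distr[OF V_density] integral_density w)
  have "?N w1 = ?N w2"
    by (rule measure_eqI) (simp_all add: emeasure_N nonneg int eq)
  then show ?thesis
    using integral_N[of w1] integral_N[of w2] nonneg by simp
qed

lemma integral_mult_comp_eq_zero:
  fixes V :: "'a \<Rightarrow> 'w::topological_space" and w :: "'a \<Rightarrow> real" and k :: "'w \<Rightarrow> real"
  assumes [measurable]: "V \<in> borel_measurable M" "w \<in> borel_measurable M" "k \<in> borel_measurable borel"
    and w_int: "integrable M w" and wk_int: "integrable M (\<lambda>\<omega>. w \<omega> * k (V \<omega>))"
    and orth: "\<And>B. B \<in> sets borel \<Longrightarrow> (\<integral>\<omega>. w \<omega> * indicator B (V \<omega>) \<partial>M) = 0"
  shows "(\<integral>\<omega>. w \<omega> * k (V \<omega>) \<partial>M) = 0"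
proof -
  define wp where "wp = (\<lambda>\<omega>. max (w \<omega>) 0)"
  define wm where "wm = (\<lambda>\<omega>. max (- w \<omega>) 0)"
  have [measurable]: "wp \<in> borel_measurable M" "wm \<in> borel_measurable M"
    unfolding wp_def wm_def by measurable
  have part_int: "integrable M (\<lambda>\<omega>. u \<omega> * g \<omega>)"
    if "u = wp \<or> u = wm" "integrable M (\<lambda>\<omega>. w \<omega> * g \<omega>)" "g \<in> borel_measurable M" for u g
    by (rule Bochner_Integration.integrable_bound[OF that(2)])
       (use that in \<open>auto intro!: AE_I2 mult_right_mono simp: wp_def wm_def abs_mult\<close>)
  have split: "(\<integral>\<omega>. w \<omega> * g \<omega> \<partial>M) = (\<integral>\<omega>. wp \<omega> * g \<omega> \<partial>M) - (\<integral>\<omega>. wm \<omega> * g \<omega> \<partial>M)"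
    if "integrable M (\<lambda>\<omega>. w \<omega> * g \<omega>)" "g \<in> borel_measurable M" for g
  proof -
    have "w \<omega> * g \<omega> = wp \<omega> * g \<omega> - wm \<omega> * g \<omega>" for \<omega>
      unfolding wp_def wm_def by (simp add: max_def algebra_simps)
    then show ?thesis
      using part_int[OF _ that] by simp
  qed
  have wB_int: "integrable M (\<lambda>\<omega>. w \<omega> * indicator B (V \<omega>))" if "B \<in> sets borel" for B
    by (rule Bochner_Integration.integrable_bound[OF w_int])
       (use that in \<open>auto intro!: AE_I2 simp: abs_mult indicator_def\<close>)
  have "(\<integral>\<omega>. wp \<omega> * k (V \<omega>) \<partial>M) = (\<integral>\<omega>. wm \<omega> * k (V \<omega>) \<partial>M)"
  proof (rule integral_mult_comp_eq_of_indicator[where V=V])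
    show "integrable M wp" "integrable M wm"
      using part_int[of _ "\<lambda>_. 1"] w_int by auto
    fix B :: "'w set" assume [measurable]: "B \<in> sets borel"
    show "(\<integral>\<omega>. wp \<omega> * indicator B (V \<omega>) \<partial>M) = (\<integral>\<omega>. wm \<omega> * indicator B (V \<omega>) \<partial>M)"
      using split[OF wB_int] orth by simp
  qed (auto simp: wp_def wm_def)
  then show ?thesis
    using split[OF wk_int] by simp
qed

definition cond_indep_pair ::
  "'a measure \<Rightarrow> 'a measure \<Rightarrow> ('a \<Rightarrow> 'u::topological_space) \<Rightarrow> ('a \<Rightarrow> 'w::topological_space) \<Rightarrow> bool"
where
  "cond_indep_pair M F U V \<longleftrightarrow> (\<forall>A B. A \<in> sets borel \<longrightarrow> B \<in> sets borel \<longrightarrow>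
     (AE \<omega> in M. real_cond_exp M F (\<lambda>\<omega>. indicator A (U \<omega>) * indicator B (V \<omega>)) \<omega>
        = real_cond_exp M F (\<lambda>\<omega>. indicator A (U \<omega>)) \<omega> * real_cond_exp M F (\<lambda>\<omega>. indicator B (V \<omega>)) \<omega>))"

context finite_measure_subalgebra
begin

lemma real_cond_exp_unit_interval:
  assumes [measurable]: "g \<in> borel_measurable M" and g: "\<And>\<omega>. 0 \<le> g \<omega>" "\<And>\<omega>. g \<omega> \<le> 1"
  shows "AE \<omega> in M. 0 \<le> real_cond_exp M F g \<omega> \<and> real_cond_exp M F g \<omega> \<le> 1"
proof -
  have "integrable M g"
    by (rule Bochner_Integration.integrable_bound[where f="\<lambda>_. 1::real"]) (use g in auto)
  then have "AE \<omega> in M. real_cond_exp M F g \<omega> \<le> real_cond_exp M F (\<lambda>_. 1) \<omega>"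
    by (intro real_cond_exp_mono) (auto simp: g(2))
  moreover have "AE \<omega> in M. real_cond_exp M F (\<lambda>_. 1) \<omega> = 1"
    by (rule real_cond_exp_F_meas) auto
  moreover have "AE \<omega> in M. 0 \<le> real_cond_exp M F g \<omega>"
    by (rule real_cond_exp_pos) (auto simp: g(1))
  ultimately show ?thesis
    by eventually_elim auto
qed

lemma integral_mult_eq_of_real_cond_exp:
  fixes z Y y :: "'a \<Rightarrow> real"
  assumes z: "square_integrable M z" "z \<in> borel_measurable F" and Y: "square_integrable M Y"
    and y: "y \<in> borel_measurable M" "AE \<omega> in M. real_cond_exp M F Y \<omega> = y \<omega>"
  shows "(\<integral>\<omega>. z \<omega> * Y \<omega> \<partial>M) = (\<integral>\<omega>. z \<omega> * y \<omega> \<partial>M)"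
proof -
  have [measurable]: "z \<in> borel_measurable M" "y \<in> borel_measurable M"
    using measurable_from_subalg[OF subalg z(2)] y(1) .
  have "(\<integral>\<omega>. z \<omega> * Y \<omega> \<partial>M) = (\<integral>\<omega>. z \<omega> * real_cond_exp M F Y \<omega> \<partial>M)"
    by (rule real_cond_exp_intg(2)[symmetric])
       (use z Y in \<open>auto intro: integrable_mult_square_integrable square_integrableD\<close>)
  also have "\<dots> = (\<integral>\<omega>. z \<omega> * y \<omega> \<partial>M)"
    using y(2) by (intro integral_cong_AE) (measurable, auto)
  finally show ?thesis .
qed

lemma integral_inner_eq_of_real_cond_exp:
  fixes Z G g :: "'a \<Rightarrow> 'v::euclidean_space"
  assumes Z: "square_integrable M Z" "Z \<in> borel_measurable F"
    and G: "square_integrable M G" and g: "square_integrable M g"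
    and unbiased: "\<And>b. b \<in> Basis \<Longrightarrow> AE \<omega> in M. real_cond_exp M F (\<lambda>\<omega>. G \<omega> \<bullet> b) \<omega> = g \<omega> \<bullet> b"
  shows "(\<integral>\<omega>. Z \<omega> \<bullet> G \<omega> \<partial>M) = (\<integral>\<omega>. Z \<omega> \<bullet> g \<omega> \<partial>M)"
proof -
  have [measurable]: "Z \<in> borel_measurable F" "g \<in> borel_measurable M"
    using Z(2) square_integrableD(1)[OF g] .
  have component_int: "integrable M (\<lambda>\<omega>. (Z \<omega> \<bullet> b) * (A \<omega> \<bullet> b))"
    if "square_integrable M A" "b \<in> Basis" for A b
    by (intro integrable_mult_square_integrable square_integrable_inner_Basis Z(1) that)
  have "(\<integral>\<omega>. Z \<omega> \<bullet> G \<omega> \<partial>M) = (\<Sum>b\<in>Basis. \<integral>\<omega>. (Z \<omega> \<bullet> b) * (G \<omega> \<bullet> b) \<partial>M)"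
    by (simp add: euclidean_inner[of "Z _" "G _"] component_int[OF G])
  also have "\<dots> = (\<Sum>b\<in>Basis. \<integral>\<omega>. (Z \<omega> \<bullet> b) * (g \<omega> \<bullet> b) \<partial>M)"
  proof (rule sum.cong[OF refl])
    fix b :: 'v assume b: "b \<in> Basis"
    show "(\<integral>\<omega>. (Z \<omega> \<bullet> b) * (G \<omega> \<bullet> b) \<partial>M) = (\<integral>\<omega>. (Z \<omega> \<bullet> b) * (g \<omega> \<bullet> b) \<partial>M)"
      by (rule integral_mult_eq_of_real_cond_exp[OF square_integrable_inner_Basis[OF Z(1) b] _
            square_integrable_inner_Basis[OF G b] _ unbiased[OF b]]) measurable
  qed
  also have "\<dots> = (\<integral>\<omega>. Z \<omega> \<bullet> g \<omega> \<partial>M)"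
    by (simp add: euclidean_inner[of "Z _" "g _"] component_int[OF g])
  finally show ?thesis .
qed

lemma cond_indep_integral_indicator_centered:
  fixes U :: "'a \<Rightarrow> 'u::topological_space" and V :: "'a \<Rightarrow> 'w::topological_space"
  assumes indep: "cond_indep_pair M F U V"
    and [measurable]: "U \<in> borel_measurable M" "V \<in> borel_measurable M" "A \<in> sets borel" "B \<in> sets borel"
  shows "(\<integral>\<omega>. (indicator A (U \<omega>) - real_cond_exp M F (\<lambda>\<omega>. indicator A (U \<omega>)) \<omega>)
      * indicator B (V \<omega>) \<partial>M) = 0"
proof -
  let ?a = "\<lambda>\<omega>. indicator A (U \<omega>) :: real"
  let ?b = "\<lambda>\<omega>. indicator B (V \<omega>) :: real"
  let ?c = "real_cond_exp M F ?a"
  have ab_int: "integrable M (\<lambda>\<omega>. ?a \<omega> * ?b \<omega>)"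
    by (rule Bochner_Integration.integrable_bound[where f="\<lambda>_. 1::real"])
       (auto intro!: AE_I2 simp: indicator_def)
  have c_int: "integrable M ?c"
    by (rule real_cond_exp_int(1), rule Bochner_Integration.integrable_bound[where f="\<lambda>_. 1::real"])
       (auto intro!: AE_I2 simp: indicator_def)
  have cb_int: "integrable M (\<lambda>\<omega>. ?c \<omega> * ?b \<omega>)"
    by (rule Bochner_Integration.integrable_bound[OF c_int]) (auto intro!: AE_I2 simp: indicator_def)
  have "(\<integral>\<omega>. ?a \<omega> * ?b \<omega> \<partial>M) = (\<integral>\<omega>. real_cond_exp M F (\<lambda>\<omega>. ?a \<omega> * ?b \<omega>) \<omega> \<partial>M)"
    using real_cond_exp_int(2)[OF ab_int] by simp
  also have "\<dots> = (\<integral>\<omega>. ?c \<omega> * real_cond_exp M F ?b \<omega> \<partial>M)"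
    by (rule integral_cong_AE) (use indep in \<open>auto simp: cond_indep_pair_def\<close>)
  also have "\<dots> = (\<integral>\<omega>. ?c \<omega> * ?b \<omega> \<partial>M)"
    by (rule real_cond_exp_intg(2)) (auto simp: cb_int)
  finally show ?thesis
    using ab_int cb_int by (simp add: left_diff_distrib)
qed

lemma cond_indep_integral_indicator:
  fixes U :: "'a \<Rightarrow> 'u::topological_space" and V :: "'a \<Rightarrow> 'w::topological_space"
  assumes indep: "cond_indep_pair M F U V"
    and [measurable]: "U \<in> borel_measurable M" "V \<in> borel_measurable M" "A \<in> sets borel"
      "k \<in> borel_measurable borel"
    and k_int: "integrable M (\<lambda>\<omega>. k (V \<omega>))"
  shows "(\<integral>\<omega>. indicator A (U \<omega>) * k (V \<omega>) \<partial>M)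
    = (\<integral>\<omega>. indicator A (U \<omega>) * real_cond_exp M F (\<lambda>\<omega>. k (V \<omega>)) \<omega> \<partial>M)"
proof -
  let ?a = "\<lambda>\<omega>. indicator A (U \<omega>) :: real"
  let ?c = "real_cond_exp M F ?a"
  let ?m = "real_cond_exp M F (\<lambda>\<omega>. k (V \<omega>))"
  have bounded_mult_int: "integrable M (\<lambda>\<omega>. h \<omega> * k (V \<omega>))"
    if [measurable]: "h \<in> borel_measurable M" and h: "AE \<omega> in M. \<bar>h \<omega>\<bar> \<le> 1" for h
  proof (rule Bochner_Integration.integrable_bound[OF k_int])
    show "AE \<omega> in M. norm (h \<omega> * k (V \<omega>)) \<le> norm (k (V \<omega>))"
      using h by eventually_elim (simp add: abs_mult mult_left_le_one_le)
  qed measurable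
  have c_unit: "AE \<omega> in M. 0 \<le> ?c \<omega> \<and> ?c \<omega> \<le> 1"
    by (rule real_cond_exp_unit_interval) auto
  have bounds: "AE \<omega> in M. \<bar>?a \<omega> - ?c \<omega>\<bar> \<le> 1" "AE \<omega> in M. \<bar>?c \<omega>\<bar> \<le> 1"
      "AE \<omega> in M. \<bar>?a \<omega>\<bar> \<le> 1"
    using c_unit by (eventually_elim, auto split: split_indicator)+
  then have ak_int: "integrable M (\<lambda>\<omega>. (?a \<omega> - ?c \<omega>) * k (V \<omega>))"
      "integrable M (\<lambda>\<omega>. ?c \<omega> * k (V \<omega>))" "integrable M (\<lambda>\<omega>. ?a \<omega> * k (V \<omega>))"
    by (auto intro!: bounded_mult_int)
  have "(\<integral>\<omega>. (?a \<omega> - ?c \<omega>) * k (V \<omega>) \<partial>M) = 0"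
  proof (rule integral_mult_comp_eq_zero[where V=V, OF _ _ _ _ ak_int(1)])
    show "integrable M (\<lambda>\<omega>. ?a \<omega> - ?c \<omega>)"
      by (rule Bochner_Integration.integrable_bound[where f="\<lambda>_. 1::real"])
         (use bounds(1) in \<open>auto elim!: eventually_mono\<close>)
  qed (auto intro: cond_indep_integral_indicator_centered[OF indep])
  then have "(\<integral>\<omega>. ?a \<omega> * k (V \<omega>) \<partial>M) = (\<integral>\<omega>. ?c \<omega> * k (V \<omega>) \<partial>M)"
    using ak_int by (simp add: left_diff_distrib)
  also have "\<dots> = (\<integral>\<omega>. ?c \<omega> * ?m \<omega> \<partial>M)"
    by (rule real_cond_exp_intg(2)[symmetric]) (auto simp: ak_int(2))
  also have "\<dots> = (\<integral>\<omega>. ?m \<omega> * ?a \<omega> \<partial>M)"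
  proof (subst mult.commute, rule real_cond_exp_intg(2))
    show "integrable M (\<lambda>\<omega>. ?m \<omega> * ?a \<omega>)"
      by (rule Bochner_Integration.integrable_bound[OF real_cond_exp_int(1)[OF k_int]])
         (auto intro!: AE_I2 simp: indicator_def)
  qed auto
  finally show ?thesis
    by (simp add: mult.commute)
qed

lemma cond_indep_integral_mult:
  fixes U :: "'a \<Rightarrow> 'u::topological_space" and V :: "'a \<Rightarrow> 'w::topological_space"
    and h k :: "_ \<Rightarrow> real"
  assumes indep: "cond_indep_pair M F U V"
    and [measurable]: "U \<in> borel_measurable M" "V \<in> borel_measurable M"
      "h \<in> borel_measurable borel" "k \<in> borel_measurable borel"
    and hU: "square_integrable M (\<lambda>\<omega>. h (U \<omega>))" and kV: "square_integrable M (\<lambda>\<omega>. k (V \<omega>))"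
    and m: "square_integrable M m" "m \<in> borel_measurable F"
      "AE \<omega> in M. real_cond_exp M F (\<lambda>\<omega>. k (V \<omega>)) \<omega> = m \<omega>"
  shows "(\<integral>\<omega>. h (U \<omega>) * k (V \<omega>) \<partial>M) = (\<integral>\<omega>. h (U \<omega>) * m \<omega> \<partial>M)"
proof -
  have [measurable]: "m \<in> borel_measurable M"
    using measurable_from_subalg[OF subalg m(2)] .
  have kV_int: "integrable M (\<lambda>\<omega>. k (V \<omega>))" and m_int: "integrable M m"
    using integrable_of_square_integrable kV m(1) by auto
  have indicator_int: "integrable M (\<lambda>\<omega>. g \<omega> * indicator A (U \<omega>))"
    if "integrable M g" "g \<in> borel_measurable M" "A \<in> sets borel" for g :: "'a \<Rightarrow> real" and A
    by (rule Bochner_Integration.integrable_bound[OF that(1)])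
       (use that in \<open>auto intro!: AE_I2 simp: indicator_def\<close>)
  have "(\<integral>\<omega>. (k (V \<omega>) - m \<omega>) * h (U \<omega>) \<partial>M) = 0"
  proof (rule integral_mult_comp_eq_zero[where V=U])
    show "integrable M (\<lambda>\<omega>. k (V \<omega>) - m \<omega>)"
      using kV_int m_int by simp
    show "integrable M (\<lambda>\<omega>. (k (V \<omega>) - m \<omega>) * h (U \<omega>))"
      by (intro integrable_mult_square_integrable square_integrable_diff kV m(1) hU)
    fix A :: "'u set" assume [measurable]: "A \<in> sets borel"
    have "(\<integral>\<omega>. indicator A (U \<omega>) * k (V \<omega>) \<partial>M)
        = (\<integral>\<omega>. indicator A (U \<omega>) * real_cond_exp M F (\<lambda>\<omega>. k (V \<omega>)) \<omega> \<partial>M)"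
      by (rule cond_indep_integral_indicator[OF indep _ _ _ _ kV_int]) measurable
    also have "\<dots> = (\<integral>\<omega>. indicator A (U \<omega>) * m \<omega> \<partial>M)"
      using m(3) by (intro integral_cong_AE) (measurable, auto)
    finally have "(\<integral>\<omega>. k (V \<omega>) * indicator A (U \<omega>) \<partial>M) = (\<integral>\<omega>. m \<omega> * indicator A (U \<omega>) \<partial>M)"
      by (simp add: mult.commute)
    then show "(\<integral>\<omega>. (k (V \<omega>) - m \<omega>) * indicator A (U \<omega>) \<partial>M) = 0"
      using indicator_int[OF kV_int] indicator_int[OF m_int] by (simp add: left_diff_distrib)
  qed measurable
  moreover have "(k (V \<omega>) - m \<omega>) * h (U \<omega>) = h (U \<omega>) * k (V \<omega>) - h (U \<omega>) * m \<omega>" for \<omega>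
    by (simp add: algebra_simps)
  ultimately show ?thesis
    using Bochner_Integration.integral_diff[OF integrable_mult_square_integrable[OF hU kV]
        integrable_mult_square_integrable[OF hU m(1)]]
    by simp
qed

lemma cond_indep_vars_imp_pair:
  fixes G :: "'i \<Rightarrow> 'a \<Rightarrow> 'v::topological_space"
  assumes indep: "cond_indep_vars M F K G" and K: "finite K" "i \<in> K" "j \<in> K" and ij: "i \<noteq> j"
  shows "cond_indep_pair M F (G i) (G j)"
  unfolding cond_indep_pair_def
proof (intro allI impI)
  fix A B :: "'v set" assume AB: "A \<in> sets borel" "B \<in> sets borel"
  define C where "C = (\<lambda>l. if l = i then A else if l = j then B else UNIV)"
  have prod_split: "(\<Prod>l\<in>K. c l) = c i * (c j * (\<Prod>l\<in>K - {i, j}. c l))" for c :: "'i \<Rightarrow> real"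
  proof -
    have K_eq: "K = insert i (insert j (K - {i, j}))"
      using K by auto
    show ?thesis
      by (subst K_eq) (use K ij in auto)
  qed
  have prod_indicator: "(\<lambda>\<omega>. \<Prod>l\<in>K. indicator (C l) (G l \<omega>) :: real)
      = (\<lambda>\<omega>. indicator A (G i \<omega>) * indicator B (G j \<omega>))"
    by (simp add: prod_split C_def ij not_sym[OF ij])
  have "\<forall>l\<in>K. C l \<in> sets borel"
    using AB by (simp add: C_def)
  then have "AE \<omega> in M. real_cond_exp M F (\<lambda>\<omega>. \<Prod>l\<in>K. indicator (C l) (G l \<omega>)) \<omega>
      = (\<Prod>l\<in>K. real_cond_exp M F (\<lambda>\<omega>. indicator (C l) (G l \<omega>)) \<omega>)"
    using indep unfolding cond_indep_vars_def by blast
  moreover have "AE \<omega> in M. real_cond_exp M F (\<lambda>_. 1) \<omega> = 1"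
    by (rule real_cond_exp_F_meas) auto
  ultimately show "AE \<omega> in M. real_cond_exp M F (\<lambda>\<omega>. indicator A (G i \<omega>) * indicator B (G j \<omega>)) \<omega>
    = real_cond_exp M F (\<lambda>\<omega>. indicator A (G i \<omega>)) \<omega> * real_cond_exp M F (\<lambda>\<omega>. indicator B (G j \<omega>)) \<omega>"
    unfolding prod_indicator by eventually_elim (simp add: prod_split C_def ij not_sym[OF ij])
qed

lemma cond_indep_integral_inner_centered:
  fixes G1 g1 G2 g2 :: "'a \<Rightarrow> 'v::euclidean_space"
  assumes indep: "cond_indep_pair M F G1 G2"
    and G1: "square_integrable M G1" and g1: "square_integrable M g1" "g1 \<in> borel_measurable F"
    and G2: "square_integrable M G2" and g2: "square_integrable M g2" "g2 \<in> borel_measurable F"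
    and unbiased1: "\<And>b. b \<in> Basis \<Longrightarrow> AE \<omega> in M. real_cond_exp M F (\<lambda>\<omega>. G1 \<omega> \<bullet> b) \<omega> = g1 \<omega> \<bullet> b"
    and unbiased2: "\<And>b. b \<in> Basis \<Longrightarrow> AE \<omega> in M. real_cond_exp M F (\<lambda>\<omega>. G2 \<omega> \<bullet> b) \<omega> = g2 \<omega> \<bullet> b"
  shows "(\<integral>\<omega>. (G1 \<omega> - g1 \<omega>) \<bullet> (G2 \<omega> - g2 \<omega>) \<partial>M) = 0"
proof -
  have [measurable]: "G1 \<in> borel_measurable M" "G2 \<in> borel_measurable M"
      "g1 \<in> borel_measurable F" "g2 \<in> borel_measurable F" "g1 \<in> borel_measurable M" "g2 \<in> borel_measurable M"
    using G1 G2 g1 g2 by (auto dest: square_integrableD)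
  have component: "(\<integral>\<omega>. ((G1 \<omega> - g1 \<omega>) \<bullet> b) * ((G2 \<omega> - g2 \<omega>) \<bullet> b) \<partial>M) = 0"
    if b: "b \<in> Basis" for b
  proof -
    let ?c = "\<lambda>A \<omega>. A \<omega> \<bullet> b"
    have sq: "square_integrable M (?c A)" if "square_integrable M A" for A :: "'a \<Rightarrow> 'v"
      using square_integrable_inner_Basis[OF that b] .
    have int: "integrable M (\<lambda>\<omega>. ?c A \<omega> * ?c B \<omega>)"
      if "square_integrable M A" "square_integrable M B" for A B :: "'a \<Rightarrow> 'v"
      using integrable_mult_square_integrable[OF sq[OF that(1)] sq[OF that(2)]] .
    have "(\<integral>\<omega>. ?c G1 \<omega> * ?c G2 \<omega> \<partial>M) = (\<integral>\<omega>. ?c G1 \<omega> * ?c g2 \<omega> \<partial>M)"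
      by (rule cond_indep_integral_mult[where h="\<lambda>u. u \<bullet> b" and k="\<lambda>u. u \<bullet> b", OF indep])
         (use G1 G2 g2 unbiased2[OF b] sq in auto)
    moreover have "(\<integral>\<omega>. ?c g2 \<omega> * ?c G1 \<omega> \<partial>M) = (\<integral>\<omega>. ?c g2 \<omega> * ?c g1 \<omega> \<partial>M)"
      by (rule integral_mult_eq_of_real_cond_exp[OF sq[OF g2(1)] _ sq[OF G1] _ unbiased1[OF b]]) auto
    moreover have "(\<integral>\<omega>. ?c g1 \<omega> * ?c G2 \<omega> \<partial>M) = (\<integral>\<omega>. ?c g1 \<omega> * ?c g2 \<omega> \<partial>M)"
      by (rule integral_mult_eq_of_real_cond_exp[OF sq[OF g1(1)] _ sq[OF G2] _ unbiased2[OF b]]) auto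
    ultimately show ?thesis
      using int[OF G1 G2] int[OF G1 g2(1)] int[OF g1(1) G2] int[OF g1(1) g2(1)]
      by (simp add: inner_diff_left algebra_simps mult.commute[of "g2 _ \<bullet> b"])
  qed
  have "(\<integral>\<omega>. (G1 \<omega> - g1 \<omega>) \<bullet> (G2 \<omega> - g2 \<omega>) \<partial>M)
      = (\<Sum>b\<in>Basis. \<integral>\<omega>. ((G1 \<omega> - g1 \<omega>) \<bullet> b) * ((G2 \<omega> - g2 \<omega>) \<bullet> b) \<partial>M)"
    unfolding euclidean_inner[of "G1 _ - g1 _" "G2 _ - g2 _"]
    by (intro Bochner_Integration.integral_sum integrable_mult_square_integrable
        square_integrable_inner_Basis square_integrable_diff G1 G2 g1 g2)
  also have "\<dots> = 0"
    by (simp add: component)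
  finally show ?thesis .
qed

end

section \<open>One step of parallel SGD\<close>

(* Step t of the iteration: F = F_t, K = I_t, X = x_t, v and G are the views and stochastic
   gradients at time t, and delta = alpha^2 B^2 is the elastic-consistency bound. *)
locale parallel_sgd_step = prob_space M + finite_measure_subalgebra M F
  for M F :: "'a measure" +
  fixes grad :: "'v::euclidean_space \<Rightarrow> 'v" and L :: real
    and K :: "nat set" and X :: "'a \<Rightarrow> 'v" and v G :: "nat \<Rightarrow> 'a \<Rightarrow> 'v" and \<sigma> \<delta> :: real
  assumes lip: "L-lipschitz_on UNIV grad"
    and finite_K: "finite K"
    and X_meas: "X \<in> borel_measurable F" and X_sq: "square_integrable M X"
    and v_meas: "\<And>i. i \<in> K \<Longrightarrow> v i \<in> borel_measurable F"
    and G_sq: "\<And>i. i \<in> K \<Longrightarrow> square_integrable M (G i)"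
    and G_indep: "cond_indep_vars M F K G"
    and G_unbiased: "\<And>i b. i \<in> K \<Longrightarrow> b \<in> Basis \<Longrightarrow>
      AE \<omega> in M. real_cond_exp M F (\<lambda>\<omega>. G i \<omega> \<bullet> b) \<omega> = grad (v i \<omega>) \<bullet> b"
    and G_var: "\<And>i. i \<in> K \<Longrightarrow>
      AE \<omega> in M. real_cond_exp M F (\<lambda>\<omega>. (norm (G i \<omega> - grad (v i \<omega>)))\<^sup>2) \<omega> \<le> \<sigma>\<^sup>2"
    and elastic: "\<And>i. i \<in> K \<Longrightarrow> (\<integral>\<^sup>+\<omega>. ennreal ((norm (X \<omega> - v i \<omega>))\<^sup>2) \<partial>M) \<le> ennreal \<delta>"
    and \<delta>_nonneg: "0 \<le> \<delta>"
begin

lemma square_integrable_view_error: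
  assumes "i \<in> K"
  shows "square_integrable M (\<lambda>\<omega>. X \<omega> - v i \<omega>)"
proof -
  have [measurable]: "X \<in> borel_measurable M" "v i \<in> borel_measurable M"
    using measurable_from_subalg[OF subalg] X_meas v_meas[OF assms] by auto
  have "integrable M (\<lambda>\<omega>. (norm (X \<omega> - v i \<omega>))\<^sup>2)"
    by (rule integrableI_nonneg) (use elastic[OF assms] in \<open>auto simp: le_less_trans\<close>)
  then show ?thesis
    unfolding square_integrable_def by simp
qed

lemma integral_view_error_le:
  assumes "i \<in> K"
  shows "(\<integral>\<omega>. (norm (X \<omega> - v i \<omega>))\<^sup>2 \<partial>M) \<le> \<delta>"
proof -
  have "ennreal (\<integral>\<omega>. (norm (X \<omega> - v i \<omega>))\<^sup>2 \<partial>M) = (\<integral>\<^sup>+\<omega>. ennreal ((norm (X \<omega> - v i \<omega>))\<^sup>2) \<partial>M)"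
    by (rule nn_integral_eq_integral[symmetric])
       (use square_integrableD(2)[OF square_integrable_view_error[OF assms]] in auto)
  also have "\<dots> \<le> ennreal \<delta>"
    using elastic[OF assms] .
  finally show ?thesis
    by (simp add: ennreal_le_iff \<delta>_nonneg)
qed

lemma grad_measurable [measurable]: "grad \<in> borel_measurable borel"
  by (rule borel_measurable_continuous_onI[OF lipschitz_on_continuous_on[OF lip]])

lemma grad_view_measurable: "i \<in> K \<Longrightarrow> (\<lambda>\<omega>. grad (v i \<omega>)) \<in> borel_measurable F"
  using v_meas by measurable

lemma square_integrable_grad_X: "square_integrable M (\<lambda>\<omega>. grad (X \<omega>))"
  using square_integrable_lipschitz_comp[OF lip X_sq] .

lemma square_integrable_grad_view: "i \<in> K \<Longrightarrow> square_integrable M (\<lambda>\<omega>. grad (v i \<omega>))"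
  using square_integrable_diff[OF X_sq square_integrable_view_error]
  by (intro square_integrable_lipschitz_comp[OF lip]) simp

lemma integral_inner_grad_view_ge:
  assumes "i \<in> K"
  shows "(\<integral>\<omega>. (norm (grad (X \<omega>)))\<^sup>2 \<partial>M) / 2 - L\<^sup>2 * \<delta> / 2 \<le> (\<integral>\<omega>. grad (X \<omega>) \<bullet> grad (v i \<omega>) \<partial>M)"
proof -
  have int: "integrable M (\<lambda>\<omega>. (norm (grad (X \<omega>)))\<^sup>2)" "integrable M (\<lambda>\<omega>. (norm (X \<omega> - v i \<omega>))\<^sup>2)"
    using square_integrableD(2) square_integrable_grad_X square_integrable_view_error[OF assms] by auto
  have "(\<integral>\<omega>. (norm (grad (X \<omega>)))\<^sup>2 \<partial>M) / 2 - L\<^sup>2 * \<delta> / 2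
      \<le> (\<integral>\<omega>. (norm (grad (X \<omega>)))\<^sup>2 \<partial>M) / 2 - L\<^sup>2 * (\<integral>\<omega>. (norm (X \<omega> - v i \<omega>))\<^sup>2 \<partial>M) / 2"
    using integral_view_error_le[OF assms] by (simp add: mult_left_mono)
  also have "\<dots> = (\<integral>\<omega>. (norm (grad (X \<omega>)))\<^sup>2 / 2 - L\<^sup>2 * (norm (X \<omega> - v i \<omega>))\<^sup>2 / 2 \<partial>M)"
    using int by simp
  also have "\<dots> \<le> (\<integral>\<omega>. grad (X \<omega>) \<bullet> grad (v i \<omega>) \<partial>M)"
    using int inner_lipschitz_image_ge[OF lip] integrable_inner_square_integrable[OF
        square_integrable_grad_X square_integrable_grad_view[OF assms]]
    by (intro integral_mono) auto
  finally show ?thesis .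
qed

lemma integral_inner_grad_sum_ge:
  "real (card K) * ((\<integral>\<omega>. (norm (grad (X \<omega>)))\<^sup>2 \<partial>M) / 2 - L\<^sup>2 * \<delta> / 2)
    \<le> (\<integral>\<omega>. grad (X \<omega>) \<bullet> (\<Sum>i\<in>K. G i \<omega>) \<partial>M)"
proof -
  have "(\<integral>\<omega>. grad (X \<omega>) \<bullet> (\<Sum>i\<in>K. G i \<omega>) \<partial>M) = (\<Sum>i\<in>K. \<integral>\<omega>. grad (X \<omega>) \<bullet> G i \<omega> \<partial>M)"
    unfolding inner_sum_right
    by (intro Bochner_Integration.integral_sum integrable_inner_square_integrable
        square_integrable_grad_X G_sq)
  also have "\<dots> = (\<Sum>i\<in>K. \<integral>\<omega>. grad (X \<omega>) \<bullet> grad (v i \<omega>) \<partial>M)"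
    using X_meas by (intro sum.cong refl integral_inner_eq_of_real_cond_exp square_integrable_grad_X
        G_sq square_integrable_grad_view G_unbiased) measurable
  also have "\<dots> \<ge> (\<Sum>i\<in>K. (\<integral>\<omega>. (norm (grad (X \<omega>)))\<^sup>2 \<partial>M) / 2 - L\<^sup>2 * \<delta> / 2)"
    by (intro sum_mono integral_inner_grad_view_ge)
  finally show ?thesis
    by simp
qed

lemma integral_norm_noise_sum_le:
  "(\<integral>\<omega>. (norm (\<Sum>i\<in>K. G i \<omega> - grad (v i \<omega>)))\<^sup>2 \<partial>M) \<le> real (card K) * \<sigma>\<^sup>2"
proof -
  have noise_sq: "square_integrable M (\<lambda>\<omega>. G i \<omega> - grad (v i \<omega>))" if "i \<in> K" for i
    using square_integrable_diff[OF G_sq[OF that] square_integrable_grad_view[OF that]] .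
  have "(\<integral>\<omega>. (norm (\<Sum>i\<in>K. G i \<omega> - grad (v i \<omega>)))\<^sup>2 \<partial>M)
      = (\<Sum>i\<in>K. \<integral>\<omega>. (norm (G i \<omega> - grad (v i \<omega>)))\<^sup>2 \<partial>M)"
  proof (rule integral_norm_sum_power2_orthogonal[OF finite_K noise_sq])
    fix i j assume "i \<in> K" "j \<in> K" "i \<noteq> j"
    then show "(\<integral>\<omega>. (G i \<omega> - grad (v i \<omega>)) \<bullet> (G j \<omega> - grad (v j \<omega>)) \<partial>M) = 0"
      by (intro cond_indep_integral_inner_centered cond_indep_vars_imp_pair[OF G_indep finite_K]
          G_sq square_integrable_grad_view grad_view_measurable G_unbiased)
  qed
  also have "\<dots> \<le> (\<Sum>i\<in>K. \<sigma>\<^sup>2)"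
  proof (rule sum_mono)
    fix i assume i: "i \<in> K"
    have int: "integrable M (\<lambda>\<omega>. (norm (G i \<omega> - grad (v i \<omega>)))\<^sup>2)"
      using square_integrableD(2)[OF noise_sq[OF i]] .
    have "(\<integral>\<omega>. (norm (G i \<omega> - grad (v i \<omega>)))\<^sup>2 \<partial>M)
        = (\<integral>\<omega>. real_cond_exp M F (\<lambda>\<omega>. (norm (G i \<omega> - grad (v i \<omega>)))\<^sup>2) \<omega> \<partial>M)"
      using real_cond_exp_int(2)[OF int] by simp
    also have "\<dots> \<le> (\<integral>\<omega>. \<sigma>\<^sup>2 \<partial>M)"
      using G_var[OF i] real_cond_exp_int(1)[OF int] by (intro integral_mono_AE) auto
    finally show "(\<integral>\<omega>. (norm (G i \<omega> - grad (v i \<omega>)))\<^sup>2 \<partial>M) \<le> \<sigma>\<^sup>2"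
      by (simp add: prob_space)
  qed
  finally show ?thesis
    by simp
qed

lemma integral_norm_grad_view_sum_le:
  "(\<integral>\<omega>. (norm (\<Sum>i\<in>K. grad (v i \<omega>)))\<^sup>2 \<partial>M)
    \<le> 2 * (real (card K))\<^sup>2 * (\<integral>\<omega>. (norm (grad (X \<omega>)))\<^sup>2 \<partial>M) + 2 * (real (card K))\<^sup>2 * L\<^sup>2 * \<delta>"
proof -
  let ?k = "real (card K)"
  let ?E = "\<integral>\<omega>. (norm (grad (X \<omega>)))\<^sup>2 \<partial>M"
  have error_int: "integrable M (\<lambda>\<omega>. (norm (X \<omega> - v i \<omega>))\<^sup>2)" if "i \<in> K" for i
    using square_integrableD(2)[OF square_integrable_view_error[OF that]] .
  have grad_int: "integrable M (\<lambda>\<omega>. (norm (grad (X \<omega>)))\<^sup>2)"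
    using square_integrableD(2)[OF square_integrable_grad_X] .
  have "(\<integral>\<omega>. (norm (\<Sum>i\<in>K. grad (v i \<omega>)))\<^sup>2 \<partial>M)
      \<le> (\<integral>\<omega>. ?k * (\<Sum>i\<in>K. 2 * (norm (grad (X \<omega>)))\<^sup>2 + 2 * L\<^sup>2 * (norm (X \<omega> - v i \<omega>))\<^sup>2) \<partial>M)"
    using norm_sum_lipschitz_image_power2_le[OF lip] error_int grad_int
      square_integrableD(2)[OF square_integrable_sum[OF square_integrable_grad_view]]
    by (intro integral_mono) auto
  also have "\<dots> = ?k * (\<Sum>i\<in>K. 2 * ?E + 2 * L\<^sup>2 * (\<integral>\<omega>. (norm (X \<omega> - v i \<omega>))\<^sup>2 \<partial>M))"
    using error_int grad_int by (simp add: Bochner_Integration.integral_sum)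
  also have "\<dots> \<le> ?k * (\<Sum>i\<in>K. 2 * ?E + 2 * L\<^sup>2 * \<delta>)"
    using integral_view_error_le by (intro mult_left_mono sum_mono add_left_mono mult_left_mono) auto
  also have "\<dots> = 2 * ?k\<^sup>2 * ?E + 2 * ?k\<^sup>2 * L\<^sup>2 * \<delta>"
    by (simp add: power2_eq_square algebra_simps)
  finally show ?thesis .
qed

lemma integral_inner_noise_grad_view_sum:
  "(\<integral>\<omega>. (\<Sum>i\<in>K. G i \<omega> - grad (v i \<omega>)) \<bullet> (\<Sum>i\<in>K. grad (v i \<omega>)) \<partial>M) = 0"
proof -
  define g where "g \<omega> = (\<Sum>i\<in>K. grad (v i \<omega>))" for \<omega>
  have g_sq: "square_integrable M g"
    unfolding g_def by (intro square_integrable_sum square_integrable_grad_view)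
  have g_meas: "g \<in> borel_measurable F"
    unfolding g_def using grad_view_measurable by measurable
  have "(\<integral>\<omega>. (\<Sum>i\<in>K. G i \<omega> - grad (v i \<omega>)) \<bullet> g \<omega> \<partial>M)
      = (\<Sum>i\<in>K. \<integral>\<omega>. g \<omega> \<bullet> G i \<omega> - g \<omega> \<bullet> grad (v i \<omega>) \<partial>M)"
    unfolding inner_sum_left
    by (subst Bochner_Integration.integral_sum)
       (auto intro!: integrable_inner_square_integrable square_integrable_diff G_sq
         square_integrable_grad_view g_sq simp: inner_diff_left inner_diff_right inner_commute)
  also have "\<dots> = 0"
  proof (rule sum.neutral, intro ballI)
    fix i assume i: "i \<in> K"
    show "(\<integral>\<omega>. g \<omega> \<bullet> G i \<omega> - g \<omega> \<bullet> grad (v i \<omega>) \<partial>M) = 0"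
      using integral_inner_eq_of_real_cond_exp[OF g_sq g_meas G_sq[OF i] square_integrable_grad_view[OF i]
          G_unbiased[OF i]]
      by (simp add: integrable_inner_square_integrable g_sq G_sq[OF i] square_integrable_grad_view[OF i])
  qed
  finally show ?thesis
    unfolding g_def .
qed

lemma integral_norm_sum_le:
  "(\<integral>\<omega>. (norm (\<Sum>i\<in>K. G i \<omega>))\<^sup>2 \<partial>M)
    \<le> real (card K) * \<sigma>\<^sup>2 + 2 * (real (card K))\<^sup>2 * (\<integral>\<omega>. (norm (grad (X \<omega>)))\<^sup>2 \<partial>M)
      + 2 * (real (card K))\<^sup>2 * L\<^sup>2 * \<delta>"
proof -
  define N where "N \<omega> = (\<Sum>i\<in>K. G i \<omega> - grad (v i \<omega>))" for \<omega>
  define g where "g \<omega> = (\<Sum>i\<in>K. grad (v i \<omega>))" for \<omega>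
  have N_sq: "square_integrable M N"
    unfolding N_def by (intro square_integrable_sum square_integrable_diff G_sq square_integrable_grad_view)
  have g_sq: "square_integrable M g"
    unfolding g_def by (intro square_integrable_sum square_integrable_grad_view)
  have "(norm (\<Sum>i\<in>K. G i \<omega>))\<^sup>2 = (norm (N \<omega>))\<^sup>2 + 2 * (N \<omega> \<bullet> g \<omega>) + (norm (g \<omega>))\<^sup>2" for \<omega>
  proof -
    have "(\<Sum>i\<in>K. G i \<omega>) = N \<omega> + g \<omega>"
      unfolding N_def g_def by (simp add: sum_subtractf)
    then show ?thesis
      by (simp add: power2_norm_eq_inner inner_add_left inner_add_right inner_commute)
  qed
  then have "(\<integral>\<omega>. (norm (\<Sum>i\<in>K. G i \<omega>))\<^sup>2 \<partial>M)
      = (\<integral>\<omega>. (norm (N \<omega>))\<^sup>2 \<partial>M) + 2 * (\<integral>\<omega>. N \<omega> \<bullet> g \<omega> \<partial>M) + (\<integral>\<omega>. (norm (g \<omega>))\<^sup>2 \<partial>M)"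
    using square_integrableD(2)[OF N_sq] square_integrableD(2)[OF g_sq]
      integrable_inner_square_integrable[OF N_sq g_sq]
    by simp
  then show ?thesis
    using integral_inner_noise_grad_view_sum integral_norm_noise_sum_le integral_norm_grad_view_sum_le
    unfolding N_def g_def by linarith
qed

end

lemma descent_bound_arith:
  fixes \<alpha> L p k E s \<delta> EF0 EF1 T Q :: real
  assumes step: "EF1 \<le> EF0 - \<alpha> / p * T + L / 2 * (\<alpha> / p)\<^sup>2 * Q"
    and T: "k * (E / 2 - L\<^sup>2 * \<delta> / 2) \<le> T"
    and Q: "Q \<le> k * s + 2 * k\<^sup>2 * E + 2 * k\<^sup>2 * L\<^sup>2 * \<delta>"
    and \<alpha>: "0 < \<alpha>" and L: "0 < L" and \<alpha>_le: "\<alpha> \<le> 1 / (8 * L)" and p: "0 < p"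
    and k: "p / 2 \<le> k" "k \<le> p" and E: "0 \<le> E" and s: "0 \<le> s" and \<delta>: "0 \<le> \<delta>"
  shows "EF1 \<le> EF0 - \<alpha> / 8 * E + \<alpha> * L\<^sup>2 * \<delta> / 2 + L * \<alpha>\<^sup>2 * s / p + 2 * L ^ 3 * \<alpha>\<^sup>2 * \<delta>"
proof -
  have L\<alpha>: "L * \<alpha> \<le> 1 / 8"
    using \<alpha>_le L by (simp add: le_divide_eq mult_ac)
  define r where "r = k / p"
  have r: "1 / 2 \<le> r" "r \<le> 1" and k_eq: "k = r * p"
    using k p by (auto simp: r_def field_simps)
  have "\<alpha> / p * (k * (E / 2 - L\<^sup>2 * \<delta> / 2)) \<le> \<alpha> / p * T"
    using T \<alpha> p by (intro mult_left_mono) auto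
  moreover have "\<alpha> / p * (k * (E / 2 - L\<^sup>2 * \<delta> / 2)) = \<alpha> * r * E / 2 - \<alpha> * r * L\<^sup>2 * \<delta> / 2"
    using p by (simp add: k_eq field_simps)
  moreover have "L / 2 * (\<alpha> / p)\<^sup>2 * Q \<le> L / 2 * (\<alpha> / p)\<^sup>2 * (k * s + 2 * k\<^sup>2 * E + 2 * k\<^sup>2 * L\<^sup>2 * \<delta>)"
    using Q L by (intro mult_left_mono) auto
  moreover have "L / 2 * (\<alpha> / p)\<^sup>2 * (k * s + 2 * k\<^sup>2 * E + 2 * k\<^sup>2 * L\<^sup>2 * \<delta>)
      = L / 2 * \<alpha>\<^sup>2 * r * s / p + (L * \<alpha> * r) * (\<alpha> * r * E) + L ^ 3 * \<alpha>\<^sup>2 * r\<^sup>2 * \<delta>"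
    using p by (simp add: k_eq field_simps power2_eq_square power3_eq_cube)
  moreover have "(L * \<alpha> * r) * (\<alpha> * r * E) \<le> 1 / 8 * (\<alpha> * r * E)"
  proof (rule mult_right_mono)
    have "L * \<alpha> * r \<le> L * \<alpha>"
      using mult_left_le[OF r(2), of "L * \<alpha>"] L \<alpha> by simp
    then show "L * \<alpha> * r \<le> 1 / 8"
      using L\<alpha> by linarith
  qed (use \<alpha> r E in simp)
  moreover have "\<alpha> * E / 2 \<le> \<alpha> * r * E"
    using mult_left_mono[OF r(1), of "\<alpha> * E"] \<alpha> E by (simp add: algebra_simps)
  moreover have "\<alpha> * r * L\<^sup>2 * \<delta> \<le> \<alpha> * L\<^sup>2 * \<delta>"
    using mult_left_mono[OF r(2), of "\<alpha> * L\<^sup>2 * \<delta>"] \<alpha> \<delta> by (simp add: algebra_simps)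
  moreover have "L / 2 * \<alpha>\<^sup>2 * r * s / p \<le> L * \<alpha>\<^sup>2 * s / p"
    using mult_left_mono[of "r / 2" 1 "L * \<alpha>\<^sup>2 * s / p"] r L p s by (simp add: algebra_simps)
  moreover have "L ^ 3 * \<alpha>\<^sup>2 * r\<^sup>2 * \<delta> \<le> 2 * L ^ 3 * \<alpha>\<^sup>2 * \<delta>"
    using mult_left_mono[of "r\<^sup>2" 2 "L ^ 3 * \<alpha>\<^sup>2 * \<delta>"] power_le_one[of r 2] r L \<delta>
    by (simp add: algebra_simps)
  moreover have "0 \<le> \<alpha> * E"
    using \<alpha> E by simp
  ultimately show ?thesis
    using step by linarith
qed

theorem mainTheorem5:
  fixes M :: "'a measure" and F :: "nat \<Rightarrow> 'a measure"
    and f :: "'v::euclidean_space \<Rightarrow> real" and grad :: "'v \<Rightarrow> 'v"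
    and L \<alpha> B \<sigma> :: real and p :: nat and I :: "nat \<Rightarrow> nat set"
    and x0 :: 'v and x :: "nat \<Rightarrow> 'a \<Rightarrow> 'v"
    and v :: "nat \<Rightarrow> nat \<Rightarrow> 'a \<Rightarrow> 'v" and G :: "nat \<Rightarrow> nat \<Rightarrow> 'a \<Rightarrow> 'v"
    and t :: nat
  assumes prob: "prob_space M"
    and filt_sub: "\<And>s. subalgebra M (F s)"
    and filt_mono: "\<And>s. sets (F s) \<subseteq> sets (F (Suc s))"
    and deriv: "\<And>y. (f has_derivative (\<lambda>h. grad y \<bullet> h)) (at y)"
    and lip: "L-lipschitz_on UNIV grad"
    and p_pos: "p \<ge> 1"
    and I_sub: "\<And>s. I s \<subseteq> {1..p}"
    and I_card: "\<And>s. real p / 2 \<le> real (card (I s))"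
    and x_init: "x 0 = (\<lambda>\<omega>. x0)"
    and x_meas: "\<And>s. x s \<in> borel_measurable (F s)"
    and v_meas: "\<And>s i. i \<in> I s \<Longrightarrow> v s i \<in> borel_measurable (F s)"
    and G_meas: "\<And>s i. i \<in> I s \<Longrightarrow> G s i \<in> borel_measurable (F (Suc s))"
    and G_sq_int: "\<And>s i. i \<in> I s \<Longrightarrow> integrable M (\<lambda>\<omega>. (norm (G s i \<omega>))\<^sup>2)"
    and G_indep: "\<And>s. cond_indep_vars M (F s) (I s) (G s)"
    and G_unbiased: "\<And>s i b. i \<in> I s \<Longrightarrow> b \<in> Basis \<Longrightarrow>
         AE \<omega> in M. real_cond_exp M (F s) (\<lambda>\<omega>. G s i \<omega> \<bullet> b) \<omega> = grad (v s i \<omega>) \<bullet> b"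
    and G_var: "\<And>s i. i \<in> I s \<Longrightarrow>
         AE \<omega> in M. real_cond_exp M (F s) (\<lambda>\<omega>. (norm (G s i \<omega> - grad (v s i \<omega>)))\<^sup>2) \<omega> \<le> \<sigma>\<^sup>2"
    and update: "\<And>s \<omega>. \<omega> \<in> space M \<Longrightarrow>
         x (Suc s) \<omega> = x s \<omega> - (\<alpha> / real p) *\<^sub>R (\<Sum>i\<in>I s. G s i \<omega>)"
    and alpha_pos: "0 < \<alpha>"
    and alpha_le: "\<alpha> \<le> 1 / (8 * L)"
    and B_pos: "0 < B"
    and elastic: "\<And>s i. i \<in> I s \<Longrightarrow>
         (\<integral>\<^sup>+\<omega>. ennreal ((norm (x s \<omega> - v s i \<omega>))\<^sup>2) \<partial>M) \<le> ennreal (\<alpha>\<^sup>2 * B\<^sup>2)"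
  shows "(\<integral>\<omega>. f (x (Suc t) \<omega>) \<partial>M)
         \<le> (\<integral>\<omega>. f (x t \<omega>) \<partial>M) - \<alpha> / 8 * (\<integral>\<omega>. (norm (grad (x t \<omega>)))\<^sup>2 \<partial>M)
           + \<alpha>^3 * B\<^sup>2 * L\<^sup>2 / 2 + L * \<alpha>\<^sup>2 * \<sigma>\<^sup>2 / real p + 2 * L^3 * \<alpha>^4 * B\<^sup>2"
proof -
  interpret prob_space M
    by (rule prob)
  have L_pos: "0 < L"
    using lipschitz_on_nonneg[OF lip] alpha_le alpha_pos by (cases "L = 0") auto
  have G_sq: "square_integrable M (G s i)" if "i \<in> I s" for s i
    using measurable_from_subalg[OF filt_sub G_meas[OF that]] G_sq_int[OF that]
    by (simp add: square_integrable_def)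
  have S_sq: "square_integrable M (\<lambda>\<omega>. \<Sum>i\<in>I s. G s i \<omega>)" for s
    by (intro square_integrable_sum G_sq)
  have x_sq: "square_integrable M (x s)" for s
    by (rule square_integrable_iterate[where D="\<lambda>s \<omega>. (\<alpha> / real p) *\<^sub>R (\<Sum>i\<in>I s. G s i \<omega>)"])
       (simp_all add: x_init square_integrable_const square_integrable_scaleR S_sq update)
  interpret step: parallel_sgd_step M "F t" grad L "I t" "x t" "v t" "G t" \<sigma> "\<alpha>\<^sup>2 * B\<^sup>2"
    by unfold_locales
      (use filt_sub lip finite_subset[OF I_sub] x_meas x_sq v_meas G_sq G_indep G_unbiased G_var
        elastic in auto)
  have "(\<integral>\<omega>. f (x (Suc t) \<omega>) \<partial>M) = (\<integral>\<omega>. f (x t \<omega> - (\<alpha> / real p) *\<^sub>R (\<Sum>i\<in>I t. G t i \<omega>)) \<partial>M)"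
    by (rule Bochner_Integration.integral_cong) (simp_all add: update)
  also have "\<dots> \<le> (\<integral>\<omega>. f (x t \<omega>) \<partial>M) - \<alpha> / real p * (\<integral>\<omega>. grad (x t \<omega>) \<bullet> (\<Sum>i\<in>I t. G t i \<omega>) \<partial>M)
      + L / 2 * (\<alpha> / real p)\<^sup>2 * (\<integral>\<omega>. (norm (\<Sum>i\<in>I t. G t i \<omega>))\<^sup>2 \<partial>M)"
    by (rule integral_lipschitz_gradient_step_le[OF deriv lip x_sq S_sq])
  finally have "(\<integral>\<omega>. f (x (Suc t) \<omega>) \<partial>M) \<le> (\<integral>\<omega>. f (x t \<omega>) \<partial>M)
      - \<alpha> / 8 * (\<integral>\<omega>. (norm (grad (x t \<omega>)))\<^sup>2 \<partial>M) + \<alpha> * L\<^sup>2 * (\<alpha>\<^sup>2 * B\<^sup>2) / 2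
      + L * \<alpha>\<^sup>2 * \<sigma>\<^sup>2 / real p + 2 * L ^ 3 * \<alpha>\<^sup>2 * (\<alpha>\<^sup>2 * B\<^sup>2)"
    by (rule descent_bound_arith[OF _ step.integral_inner_grad_sum_ge step.integral_norm_sum_le
          alpha_pos L_pos alpha_le _ I_card])
       (use p_pos card_mono[OF _ I_sub[of t]] in auto)
  then show ?thesis
    by (simp add: power2_eq_square power3_eq_cube power4_eq_xxxx algebra_simps)
qed

end
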